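(* Let $X$, $Y_k$ ($k\in\mathbb N$) and norms $\|\cdot\|_{X\oplus Y_k}$ be as in the generalized $\ell^2$-sum setting. If $x^*\in X^*$ and $y_k^*\in Y_k^*$ ($k\in\mathbb N$) satisfy $\sup_k\|x^*+y_k^*\|_{X\oplus Y_k}<\infty$, and $0\le\alpha_k\le1$ ($k\in\mathbb N$) satisfy $\sum_k\alpha_k^2\le1$, then $$\Big\|x^*+\sum_k\alpha_ky_k^*\Big\|_\Sigma\le\sup_k\|x^*+y_k^*\|_{X\oplus Y_k}.$$
   Context: Setting: $(X,\|\cdot\|_X)$ and $(Y_k,\|\cdot\|_{Y_k})$, $k\in\mathbb N$, are Banach spaces; for each $k$, $\|\cdot\|_{X\oplus Y_k}$ is a norm on $X\oplus Y_k$ coinciding with $\|\cdot\|_X$ on $X$ and with $\|\cdot\|_{Y_k}$ on $Y_k$, and monotone: $\|x+y_k\|_{X\oplus Y_k}\ge\|x\|_X$. Duals of direct sums are identified with direct sums of duals via $(x^*+y^* )(x+y)=x^*(x)+y^*(y)$. $\Lambda(X\oplus Y_k)$ is the set of functionals $x^*+\sum_k\alpha_ky_k^*$ (acting by $x+\sum y_k\mapsto x^*(x)+\sum\alpha_ky_k^*(y_k)$) with $x^*\in X^*$, $y_k^*\in Y_k^*$, $\|x^*+y_k^*\|_{X\oplus Y_k}\le1$ for all $k$, $0\le\alpha_k\le1$, $\sum\alpha_k^2\le1$. $\Sigma(X\oplus Y_k)=\{x+y_1+y_2+\dots:x\in X,y_k\in Y_k,\sum\|y_k\|_{Y_k}^2<\infty\}$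 with $\|z\|_\Sigma=\sup\{|z^*(z)|:z^*\in\Lambda(X\oplus Y_k)\}$; the dual norm is also denoted $\|\cdot\|_\Sigma$. *)

theory Defs
  imports "HOL-Analysis.Analysis"
begin

text \<open>X is the whole type 'a. Each Y_k is a closed linear
subspace of an ambient real Banach type 'b with the inherited norm.
An element x + y of X \<oplus> Y_k is the pair (x, y) with y \<in> Y_k, and the
norm on X \<oplus> Y_k is given by N :: 'a \<Rightarrow> 'b \<Rightarrow> real.\<close>

definition sum_norm :: "'b::real_normed_vector set \<Rightarrow> ('a::real_normed_vector \<Rightarrow> 'b \<Rightarrow> real) \<Rightarrow> bool" where
  "sum_norm Y N \<longleftrightarrow>
     (\<forall>x. \<forall>y\<in>Y. 0 \<le> N x y) \<and>
     (\<forall>x. \<forall>y\<in>Y. N x y = 0 \<longrightarrow> x = 0 \<and> y = 0) \<and>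
     (\<forall>c x. \<forall>y\<in>Y. N (c *\<^sub>R x) (c *\<^sub>R y) = \<bar>c\<bar> * N x y) \<and>
     (\<forall>x x'. \<forall>y\<in>Y. \<forall>y'\<in>Y. N (x + x') (y + y') \<le> N x y + N x' y') \<and>
     (\<forall>x. N x 0 = norm x) \<and>
     (\<forall>y\<in>Y. N 0 y = norm y) \<and>
     (\<forall>x. \<forall>y\<in>Y. norm x \<le> N x y)"

definition lin_func_on :: "'b::real_normed_vector set \<Rightarrow> ('b \<Rightarrow> real) \<Rightarrow> bool" where
  "lin_func_on Y f \<longleftrightarrow>
     (\<forall>u\<in>Y. \<forall>v\<in>Y. f (u + v) = f u + f v) \<and>
     (\<forall>c. \<forall>u\<in>Y. f (c *\<^sub>R u) = c * f u) \<and>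
     (\<exists>K. \<forall>u\<in>Y. \<bar>f u\<bar> \<le> K * norm u)"

definition dual_sum_norm ::
  "'b::real_normed_vector set \<Rightarrow> ('a::real_normed_vector \<Rightarrow> 'b \<Rightarrow> real) \<Rightarrow> ('a \<Rightarrow> real) \<Rightarrow> ('b \<Rightarrow> real) \<Rightarrow> real" where
  "dual_sum_norm Y N xs ys = Sup {\<bar>xs x + ys y\<bar> | x y. y \<in> Y \<and> N x y \<le> 1}"

text \<open>Action of x^* + \<Sum> \<alpha>_k y_k^* on x + y_1 + y_2 + ...\<close>
definition act :: "('a \<Rightarrow> real) \<Rightarrow> (nat \<Rightarrow> 'b \<Rightarrow> real) \<Rightarrow> (nat \<Rightarrow> real) \<Rightarrow> 'a \<times> (nat \<Rightarrow> 'b) \<Rightarrow> real" where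
  "act xs ys \<alpha> z = xs (fst z) + (\<Sum>k. \<alpha> k * ys k (snd z k))"

definition LambdaSet ::
  "(nat \<Rightarrow> 'b::real_normed_vector set) \<Rightarrow> (nat \<Rightarrow> 'a::real_normed_vector \<Rightarrow> 'b \<Rightarrow> real)
     \<Rightarrow> (('a \<Rightarrow> real) \<times> (nat \<Rightarrow> 'b \<Rightarrow> real) \<times> (nat \<Rightarrow> real)) set" where
  "LambdaSet Y N = {(xs, ys, \<alpha>). bounded_linear xs \<and> (\<forall>k. lin_func_on (Y k) (ys k)) \<and>
       (\<forall>k. dual_sum_norm (Y k) (N k) xs (ys k) \<le> 1) \<and>
       (\<forall>k. 0 \<le> \<alpha> k \<and> \<alpha> k \<le> 1) \<and> summable (\<lambda>k. (\<alpha> k)\<^sup>2) \<and> (\<Sum>k. (\<alpha> k)\<^sup>2) \<le> 1}"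

definition SigmaSet :: "(nat \<Rightarrow> 'b::real_normed_vector set) \<Rightarrow> ('a \<times> (nat \<Rightarrow> 'b)) set" where
  "SigmaSet Y = {(x, y). (\<forall>k. y k \<in> Y k) \<and> summable (\<lambda>k. (norm (y k))\<^sup>2)}"

definition sigma_norm ::
  "(nat \<Rightarrow> 'b::real_normed_vector set) \<Rightarrow> (nat \<Rightarrow> 'a::real_normed_vector \<Rightarrow> 'b \<Rightarrow> real)
     \<Rightarrow> 'a \<times> (nat \<Rightarrow> 'b) \<Rightarrow> real" where
  "sigma_norm Y N z = Sup {\<bar>act xs ys \<alpha> z\<bar> | xs ys \<alpha>. (xs, ys, \<alpha>) \<in> LambdaSet Y N}"

definition sigma_dual_norm ::
  "(nat \<Rightarrow> 'b::real_normed_vector set) \<Rightarrow> (nat \<Rightarrow> 'a::real_normed_vector \<Rightarrow> 'b \<Rightarrow> real)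
     \<Rightarrow> ('a \<times> (nat \<Rightarrow> 'b) \<Rightarrow> real) \<Rightarrow> real" where
  "sigma_dual_norm Y N f = Sup {\<bar>f z\<bar> | z. z \<in> SigmaSet Y \<and> sigma_norm Y N z \<le> 1}"

end

theory Submission
  imports Defs
begin

text \<open>Write \<open>M\<close> for the supremum of the dual norms of \<open>x\<^sup>* + y\<^sub>k\<^sup>*\<close>. For every \<open>c > M\<close> the
  functional \<open>(x\<^sup>* + \<Sum> \<alpha>\<^sub>k y\<^sub>k\<^sup>*) / c\<close> has all its components \<open>(x\<^sup>* + y\<^sub>k\<^sup>*) / c\<close> in the unit balls
  of the duals of \<open>X \<oplus> Y\<^sub>k\<close>, so it belongs to \<open>\<Lambda>(X \<oplus> Y\<^sub>k)\<close>, and by the very definition of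
  the \<open>\<Sigma>\<close>-norm its value at any \<open>z\<close> is bounded by \<open>\<parallel>z\<parallel>\<^sub>\<Sigma>\<close>. Hence the original functional
  is bounded by \<open>c\<close> on the unit ball of \<open>\<Sigma>\<close>, and letting \<open>c\<close> decrease to \<open>M\<close> gives the claim.
  The only analytic input is that elements of \<open>\<Lambda>\<close> are bounded on each element of \<open>\<Sigma>\<close>
  (so that the suprema involved are finite), which follows from \<open>2 a b \<le> a\<^sup>2 + b\<^sup>2\<close>.\<close>

lemma sum_norm_nonneg: "sum_norm Y N \<Longrightarrow> y \<in> Y \<Longrightarrow> 0 \<le> N x y"
  by (simp add: sum_norm_def)

lemma sum_norm_eq_0D: "sum_norm Y N \<Longrightarrow> y \<in> Y \<Longrightarrow> N x y = 0 \<Longrightarrow> x = 0 \<and> y = 0"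
  by (simp add: sum_norm_def)

lemma sum_norm_scaleR: "sum_norm Y N \<Longrightarrow> y \<in> Y \<Longrightarrow> N (c *\<^sub>R x) (c *\<^sub>R y) = \<bar>c\<bar> * N x y"
  by (simp add: sum_norm_def)

lemma sum_norm_triangle:
  "sum_norm Y N \<Longrightarrow> y \<in> Y \<Longrightarrow> y' \<in> Y \<Longrightarrow> N (x + x') (y + y') \<le> N x y + N x' y'"
  by (simp add: sum_norm_def)

lemma sum_norm_left: "sum_norm Y N \<Longrightarrow> N x 0 = norm x"
  by (simp add: sum_norm_def)

lemma sum_norm_right: "sum_norm Y N \<Longrightarrow> y \<in> Y \<Longrightarrow> N 0 y = norm y"
  by (simp add: sum_norm_def)

lemma norm_le_sum_norm: "sum_norm Y N \<Longrightarrow> y \<in> Y \<Longrightarrow> norm x \<le> N x y"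
  by (simp add: sum_norm_def)

lemma norm_right_le_sum_norm:
  assumes N: "sum_norm Y N" and Y: "subspace Y" and y: "y \<in> Y"
  shows "norm y \<le> 2 * N x y"
proof -
  have "norm y = N (x + - x) (y + 0)"
    using sum_norm_right[OF N y] by simp
  also have "\<dots> \<le> N x y + N (- x) 0"
    using sum_norm_triangle[OF N y subspace_0[OF Y]] .
  also have "\<dots> \<le> 2 * N x y"
    using sum_norm_left[OF N, of "- x"] norm_le_sum_norm[OF N y, of x] by simp
  finally show ?thesis .
qed

lemma lin_func_on_scaleR: "lin_func_on Y f \<Longrightarrow> u \<in> Y \<Longrightarrow> f (c *\<^sub>R u) = c * f u"
  unfolding lin_func_on_def by blast

lemma lin_func_on_0: "lin_func_on Y f \<Longrightarrow> subspace Y \<Longrightarrow> f 0 = 0"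
  using lin_func_on_scaleR[of Y f 0 0] subspace_0 by fastforce

lemma lin_func_on_divide:
  assumes "lin_func_on Y f"
  shows "lin_func_on Y (\<lambda>u. f u / c)"
proof -
  obtain K where K: "\<forall>u\<in>Y. \<bar>f u\<bar> \<le> K * norm u"
    using assms unfolding lin_func_on_def by blast
  have "\<bar>f u / c\<bar> \<le> (\<bar>K\<bar> / \<bar>c\<bar>) * norm u" if "u \<in> Y" for u
  proof -
    have "\<bar>f u\<bar> \<le> \<bar>K\<bar> * norm u"
      using K that by (meson abs_ge_self mult_right_mono norm_ge_zero order_trans)
    then show ?thesis
      by (simp add: abs_divide divide_right_mono)
  qed
  then show ?thesis
    using assms unfolding lin_func_on_def
    by (auto simp: add_divide_distrib intro!: exI[of _ "\<bar>K\<bar> / \<bar>c\<bar>"])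
qed

lemma lin_func_on_zero: "lin_func_on Y (\<lambda>_. 0)"
  unfolding lin_func_on_def by (auto intro!: exI[of _ 0])

lemma dual_sum_norm_set_bdd_above:
  assumes N: "sum_norm Y N" and Y: "subspace Y" and xs: "bounded_linear xs"
    and ys: "lin_func_on Y ys"
  shows "bdd_above {\<bar>xs x + ys y\<bar> | x y. y \<in> Y \<and> N x y \<le> 1}"
proof -
  obtain Kx where Kx: "\<And>x. \<bar>xs x\<bar> \<le> norm x * Kx"
    using bounded_linear.bounded[OF xs] by auto
  obtain K where K: "\<forall>u\<in>Y. \<bar>ys u\<bar> \<le> K * norm u"
    using ys unfolding lin_func_on_def by blast
  have "\<bar>xs x + ys u\<bar> \<le> \<bar>Kx\<bar> + 2 * \<bar>K\<bar>" if u: "u \<in> Y" and le: "N x u \<le> 1" for x u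
  proof -
    have nx: "norm x \<le> 1"
      using norm_le_sum_norm[OF N u, of x] le by linarith
    have nu: "norm u \<le> 2"
      using norm_right_le_sum_norm[OF N Y u, of x] le by linarith
    have "\<bar>xs x\<bar> \<le> norm x * \<bar>Kx\<bar>"
      using Kx[of x] by (meson abs_ge_self mult_left_mono norm_ge_zero order_trans)
    also have "\<dots> \<le> \<bar>Kx\<bar>"
      using nx by (simp add: mult_left_le_one_le)
    finally have xs_le: "\<bar>xs x\<bar> \<le> \<bar>Kx\<bar>" .
    have "\<bar>ys u\<bar> \<le> \<bar>K\<bar> * norm u"
      using K u by (meson abs_ge_self mult_right_mono norm_ge_zero order_trans)
    also have "\<dots> \<le> \<bar>K\<bar> * 2"
      using nu by (simp add: mult_left_mono)
    finally show ?thesis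
      using xs_le by linarith
  qed
  then show ?thesis
    unfolding bdd_above_def by blast
qed

lemma dual_sum_norm_upper:
  assumes N: "sum_norm Y N" and Y: "subspace Y" and xs: "bounded_linear xs"
    and ys: "lin_func_on Y ys" and u: "u \<in> Y" and le: "N x u \<le> 1"
  shows "\<bar>xs x + ys u\<bar> \<le> dual_sum_norm Y N xs ys"
  unfolding dual_sum_norm_def
  by (rule cSup_upper[OF _ dual_sum_norm_set_bdd_above[OF N Y xs ys]]) (use u le in auto)

lemma dual_sum_norm_least:
  assumes N: "sum_norm Y N" and Y: "subspace Y"
    and bound: "\<And>x y. y \<in> Y \<Longrightarrow> N x y \<le> 1 \<Longrightarrow> \<bar>xs x + ys y\<bar> \<le> b"
  shows "dual_sum_norm Y N xs ys \<le> b"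
  unfolding dual_sum_norm_def
proof (rule cSup_least)
  have "N 0 0 = 0"
    using sum_norm_left[OF N, of 0] by simp
  then show "{\<bar>xs x + ys y\<bar> | x y. y \<in> Y \<and> N x y \<le> 1} \<noteq> {}"
    using subspace_0[OF Y] by (auto intro!: exI[of _ 0])
qed (use bound in auto)

lemma dual_sum_norm_nonneg:
  assumes N: "sum_norm Y N" and Y: "subspace Y" and xs: "bounded_linear xs"
    and ys: "lin_func_on Y ys"
  shows "0 \<le> dual_sum_norm Y N xs ys"
  using dual_sum_norm_upper[OF N Y xs ys subspace_0[OF Y], of 0] sum_norm_left[OF N, of 0]
  by simp

lemma dual_sum_norm_bound:
  assumes N: "sum_norm Y N" and Y: "subspace Y" and xs: "bounded_linear xs"
    and ys: "lin_func_on Y ys" and u: "u \<in> Y"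
  shows "\<bar>xs x + ys u\<bar> \<le> dual_sum_norm Y N xs ys * N x u"
proof (cases "N x u = 0")
  case True
  then show ?thesis
    using sum_norm_eq_0D[OF N u True] lin_func_on_0[OF ys Y] linear_simps(3)[OF xs] by simp
next
  case False
  then have pos: "N x u > 0"
    using sum_norm_nonneg[OF N u, of x] by linarith
  define t where "t = 1 / N x u"
  have t: "t > 0"
    using pos by (simp add: t_def)
  have "N (t *\<^sub>R x) (t *\<^sub>R u) = 1"
    using sum_norm_scaleR[OF N u] t pos by (simp add: t_def)
  then have "\<bar>xs (t *\<^sub>R x) + ys (t *\<^sub>R u)\<bar> \<le> dual_sum_norm Y N xs ys"
    by (intro dual_sum_norm_upper[OF N Y xs ys] subspace_scale[OF Y u]) simp
  moreover have "xs (t *\<^sub>R x) + ys (t *\<^sub>R u) = t * (xs x + ys u)"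
    using linear_simps(5)[OF xs] lin_func_on_scaleR[OF ys u] by (simp add: algebra_simps)
  ultimately have "t * \<bar>xs x + ys u\<bar> \<le> dual_sum_norm Y N xs ys"
    using t by (simp add: abs_mult)
  then show ?thesis
    using pos by (simp add: t_def field_simps)
qed

lemma dual_sum_norm_divide_le:
  assumes N: "sum_norm Y N" and Y: "subspace Y" and xs: "bounded_linear xs"
    and ys: "lin_func_on Y ys" and c: "c > 0"
  shows "dual_sum_norm Y N (\<lambda>x. xs x / c) (\<lambda>y. ys y / c) \<le> dual_sum_norm Y N xs ys / c"
proof (rule dual_sum_norm_least[OF N Y])
  fix x y assume y: "y \<in> Y" and le: "N x y \<le> 1"
  have "\<bar>xs x + ys y\<bar> \<le> dual_sum_norm Y N xs ys"
    using dual_sum_norm_upper[OF N Y xs ys y le] .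
  then show "\<bar>xs x / c + ys y / c\<bar> \<le> dual_sum_norm Y N xs ys / c"
    using c by (simp add: add_divide_distrib[symmetric] abs_divide divide_right_mono)
qed

lemma summable_weighted_abs_le:
  fixes a f b :: "nat \<Rightarrow> real"
  assumes a: "\<And>k. 0 \<le> a k" "summable (\<lambda>k. (a k)\<^sup>2)" "(\<Sum>k. (a k)\<^sup>2) \<le> 1"
    and b: "summable (\<lambda>k. (b k)\<^sup>2)"
    and f: "\<And>k. \<bar>f k\<bar> \<le> b k"
  shows "summable (\<lambda>k. \<bar>a k * f k\<bar>)"
    and "\<bar>\<Sum>k. a k * f k\<bar> \<le> (1 + (\<Sum>k. (b k)\<^sup>2)) / 2"
proof -
  have am_gm: "\<bar>a k * f k\<bar> \<le> ((a k)\<^sup>2 + (b k)\<^sup>2) / 2" for k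
  proof -
    have "\<bar>a k * f k\<bar> \<le> a k * b k"
      using a(1)[of k] f[of k] by (simp add: abs_mult mult_left_mono)
    also have "\<dots> \<le> ((a k)\<^sup>2 + (b k)\<^sup>2) / 2"
      using sum_squares_ge_zero[of "a k - b k" 0] by (simp add: power2_eq_square algebra_simps)
    finally show ?thesis .
  qed
  have sum_sq: "summable (\<lambda>k. ((a k)\<^sup>2 + (b k)\<^sup>2) / 2)"
    by (intro summable_divide summable_add a(2) b)
  show abs_summable: "summable (\<lambda>k. \<bar>a k * f k\<bar>)"
    by (rule summable_comparison_test'[OF sum_sq]) (use am_gm in simp)
  have "\<bar>\<Sum>k. a k * f k\<bar> \<le> (\<Sum>k. \<bar>a k * f k\<bar>)"
    by (rule summable_rabs[OF abs_summable])
  also have "\<dots> \<le> (\<Sum>k. ((a k)\<^sup>2 + (b k)\<^sup>2) / 2)"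
    by (rule suminf_le[OF am_gm abs_summable sum_sq])
  also have "\<dots> = ((\<Sum>k. (a k)\<^sup>2) + (\<Sum>k. (b k)\<^sup>2)) / 2"
    using suminf_divide[OF summable_add[OF a(2) b], of 2] suminf_add[OF a(2) b] by simp
  also have "\<dots> \<le> (1 + (\<Sum>k. (b k)\<^sup>2)) / 2"
    using a(3) by simp
  finally show "\<bar>\<Sum>k. a k * f k\<bar> \<le> (1 + (\<Sum>k. (b k)\<^sup>2)) / 2" .
qed

lemma act_LambdaSet_bound:
  assumes Y: "\<And>k. subspace (Y k)" and N: "\<And>k. sum_norm (Y k) (N k)"
    and L: "(xs, ys, a) \<in> LambdaSet Y N" and z: "(x, y) \<in> SigmaSet Y"
  shows "summable (\<lambda>k. \<bar>a k * ys k (y k)\<bar>)"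
    and "\<bar>act xs ys a (x, y)\<bar> \<le> norm x + (1 + (\<Sum>k. (norm (y k))\<^sup>2)) / 2"
proof -
  have xs: "bounded_linear xs" and ys: "\<And>k. lin_func_on (Y k) (ys k)"
    and D: "\<And>k. dual_sum_norm (Y k) (N k) xs (ys k) \<le> 1"
    and a: "\<And>k. 0 \<le> a k" "summable (\<lambda>k. (a k)\<^sup>2)" "(\<Sum>k. (a k)\<^sup>2) \<le> 1"
    using L unfolding LambdaSet_def by auto
  have yk: "\<And>k. y k \<in> Y k" and y: "summable (\<lambda>k. (norm (y k))\<^sup>2)"
    using z unfolding SigmaSet_def by auto
  have unit: "\<bar>xs x' + ys k u\<bar> \<le> N k x' u" if "u \<in> Y k" for k x' u
    using dual_sum_norm_bound[OF N Y xs ys that, of x']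
      mult_right_mono[OF D[of k] sum_norm_nonneg[OF N that, of x']]
    by linarith
  have ys_bound: "\<bar>ys k (y k)\<bar> \<le> norm (y k)" for k
    using unit[where k=k and x'=0, OF yk] sum_norm_right[OF N yk] linear_simps(3)[OF xs] by simp
  have xs_bound: "\<bar>xs x\<bar> \<le> norm x"
    using unit[where k=0 and x'=x, OF subspace_0[OF Y]] sum_norm_left[OF N] lin_func_on_0[OF ys Y] by simp
  show "summable (\<lambda>k. \<bar>a k * ys k (y k)\<bar>)"
    by (rule summable_weighted_abs_le(1)[OF a y ys_bound])
  show "\<bar>act xs ys a (x, y)\<bar> \<le> norm x + (1 + (\<Sum>k. (norm (y k))\<^sup>2)) / 2"
    using summable_weighted_abs_le(2)[OF a y ys_bound] xs_bound
      abs_triangle_ineq[of "xs x" "\<Sum>k. a k * ys k (y k)"]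
    unfolding act_def fst_conv snd_conv by linarith
qed

lemma act_le_sigma_norm:
  assumes Y: "\<And>k. subspace (Y k)" and N: "\<And>k. sum_norm (Y k) (N k)"
    and L: "(xs, ys, a) \<in> LambdaSet Y N" and z: "z \<in> SigmaSet Y"
  shows "\<bar>act xs ys a z\<bar> \<le> sigma_norm Y N z"
proof -
  obtain x y where xy: "z = (x, y)"
    by (cases z)
  have "bdd_above {\<bar>act xs' ys' a' z\<bar> | xs' ys' a'. (xs', ys', a') \<in> LambdaSet Y N}"
    unfolding bdd_above_def xy using act_LambdaSet_bound(2)[OF Y N _ z[unfolded xy]] by blast
  then show ?thesis
    unfolding sigma_norm_def by (rule cSup_upper[rotated]) (use L in blast)
qed

lemma zero_in_LambdaSet:
  assumes Y: "\<And>k. subspace (Y k)" and N: "\<And>k. sum_norm (Y k) (N k)"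
  shows "((\<lambda>_. 0), (\<lambda>_ _. 0), (\<lambda>_. 0)) \<in> LambdaSet Y N"
proof -
  have "dual_sum_norm (Y k) (N k) (\<lambda>_. 0) (\<lambda>_. 0) \<le> 1" for k
    by (rule dual_sum_norm_least[OF N Y]) simp
  then show ?thesis
    unfolding LambdaSet_def by (auto simp: bounded_linear_zero lin_func_on_zero)
qed

lemma sigma_norm_zero:
  assumes Y: "\<And>k. subspace (Y k)" and N: "\<And>k. sum_norm (Y k) (N k)"
  shows "sigma_norm Y N (0, \<lambda>_. 0) = 0"
proof -
  have "act xs ys a (0, \<lambda>_. 0) = 0" if "(xs, ys, a) \<in> LambdaSet Y N" for xs ys a
  proof -
    have "xs 0 = 0" and "\<And>k. ys k 0 = 0"
      using that linear_simps(3) lin_func_on_0[OF _ Y] unfolding LambdaSet_def by auto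
    then show ?thesis
      unfolding act_def by simp
  qed
  then have "{\<bar>act xs ys a (0, \<lambda>_. 0)\<bar> | xs ys a. (xs, ys, a) \<in> LambdaSet Y N} = {0}"
    using zero_in_LambdaSet[OF Y N] by fastforce
  then show ?thesis
    unfolding sigma_norm_def by simp
qed

lemma act_divide:
  assumes "summable (\<lambda>k. a k * ys k (y k))"
  shows "act (\<lambda>v. xs v / c) (\<lambda>k v. ys k v / c) a (x, y) = act xs ys a (x, y) / c"
  using suminf_divide[OF assms, of c] unfolding act_def by (simp add: add_divide_distrib)

lemma act_le_mult_sigma_norm:
  assumes Y: "\<And>k. subspace (Y k)" and N: "\<And>k. sum_norm (Y k) (N k)"
    and xs: "bounded_linear xs" and ys: "\<And>k. lin_func_on (Y k) (ys k)"
    and a: "\<And>k. 0 \<le> a k \<and> a k \<le> 1" "summable (\<lambda>k. (a k)\<^sup>2)" "(\<Sum>k. (a k)\<^sup>2) \<le> 1"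
    and c: "c > 0" and D: "\<And>k. dual_sum_norm (Y k) (N k) xs (ys k) \<le> c"
    and z: "z \<in> SigmaSet Y"
  shows "\<bar>act xs ys a z\<bar> \<le> c * sigma_norm Y N z"
proof -
  obtain x y where xy: "z = (x, y)"
    by (cases z)
  define xs' where "xs' = (\<lambda>v. xs v / c)"
  define ys' where "ys' = (\<lambda>k v. ys k v / c)"
  have "dual_sum_norm (Y k) (N k) xs' (ys' k) \<le> 1" for k
  proof -
    have "dual_sum_norm (Y k) (N k) xs (ys k) / c \<le> 1"
      using D[of k] c by simp
    then show ?thesis
      using dual_sum_norm_divide_le[OF N Y xs ys c, of k] unfolding xs'_def ys'_def by simp
  qed
  moreover have "bounded_linear xs'"
    unfolding xs'_def using bounded_linear_compose[OF bounded_linear_divide xs] by (simp add: o_def)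
  ultimately have L: "(xs', ys', a) \<in> LambdaSet Y N"
    unfolding LambdaSet_def ys'_def using lin_func_on_divide[OF ys] a by blast
  have "summable (\<lambda>k. a k * ys' k (y k))"
    using act_LambdaSet_bound(1)[OF Y N L z[unfolded xy]] by (rule summable_rabs_cancel)
  then have "summable (\<lambda>k. a k * ys k (y k))"
    using c unfolding ys'_def by (simp add: summable_divide_iff)
  then have "act xs' ys' a z = act xs ys a z / c"
    unfolding xs'_def ys'_def xy by (rule act_divide)
  then have "\<bar>act xs ys a z\<bar> = c * \<bar>act xs' ys' a z\<bar>"
    using c by (simp add: abs_divide)
  also have "\<dots> \<le> c * sigma_norm Y N z"
    using act_le_sigma_norm[OF Y N L z] c by (simp add: mult_left_mono)
  finally show ?thesis .
qed

theorem lemma3p3: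
  fixes Y :: "nat \<Rightarrow> 'b::banach set"
    and N :: "nat \<Rightarrow> 'a::banach \<Rightarrow> 'b \<Rightarrow> real"
    and xs :: "'a \<Rightarrow> real"
    and ys :: "nat \<Rightarrow> 'b \<Rightarrow> real"
    and \<alpha> :: "nat \<Rightarrow> real"
  assumes Ysub: "\<forall>k. subspace (Y k) \<and> closed (Y k)"
    and Nnorm: "\<forall>k. sum_norm (Y k) (N k)"
    and xs: "bounded_linear xs"
    and ys: "\<forall>k. lin_func_on (Y k) (ys k)"
    and bdd: "bdd_above (range (\<lambda>k. dual_sum_norm (Y k) (N k) xs (ys k)))"
    and \<alpha>: "\<forall>k. 0 \<le> \<alpha> k \<and> \<alpha> k \<le> 1"
    and \<alpha>sum: "summable (\<lambda>k. (\<alpha> k)\<^sup>2)" "(\<Sum>k. (\<alpha> k)\<^sup>2) \<le> 1"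
  shows "sigma_dual_norm Y N (act xs ys \<alpha>)
           \<le> (SUP k. dual_sum_norm (Y k) (N k) xs (ys k))"
proof -
  define M where "M = (SUP k. dual_sum_norm (Y k) (N k) xs (ys k))"
  have Y: "\<And>k. subspace (Y k)" and N: "\<And>k. sum_norm (Y k) (N k)"
    and ys: "\<And>k. lin_func_on (Y k) (ys k)"
    using Ysub Nnorm ys by auto
  have D: "\<And>k. dual_sum_norm (Y k) (N k) xs (ys k) \<le> M"
    unfolding M_def by (rule cSUP_upper[OF UNIV_I bdd])
  have "0 \<le> M"
    using dual_sum_norm_nonneg[OF N Y xs ys, of 0] D[of 0] by linarith
  have "\<bar>act xs ys \<alpha> z\<bar> \<le> M" if z: "z \<in> SigmaSet Y" and z1: "sigma_norm Y N z \<le> 1" for z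
  proof (rule dense_ge)
    fix c assume "M < c"
    moreover have "\<And>k. dual_sum_norm (Y k) (N k) xs (ys k) \<le> c"
      using D \<open>M < c\<close> by (meson less_imp_le order_trans)
    ultimately have "\<bar>act xs ys \<alpha> z\<bar> \<le> c * sigma_norm Y N z"
      using \<open>0 \<le> M\<close> \<alpha> \<alpha>sum by (intro act_le_mult_sigma_norm[OF Y N xs ys _ _ _ _ _ z]) auto
    then show "\<bar>act xs ys \<alpha> z\<bar> \<le> c"
      using mult_left_le[OF z1, of c] \<open>0 \<le> M\<close> \<open>M < c\<close> by linarith
  qed
  moreover have "(0, \<lambda>_. 0) \<in> SigmaSet Y" "sigma_norm Y N (0, \<lambda>_. 0) \<le> 1"
    unfolding SigmaSet_def using subspace_0[OF Y] sigma_norm_zero[of Y N, OF Y N] by auto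
  ultimately show ?thesis
    unfolding sigma_dual_norm_def M_def[symmetric] by (intro cSup_least) blast+
qed

end
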